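(* Let $x_0\in W^2_\infty(0,1)$ be positive with $x_0(0)>0$, let $F(x)(s)=\int_0^s x(s-t)x(t)\,dt$, and let $y^\delta=F(x_0)+\delta\xi$ where $\delta\in(0,1]$ and $\|\xi\|_\infty\le\delta$. Let $\sigma>0$ and let $m\in\mathbb{N}$ with $m\ge 1/\delta$. Let $Q_m$ be the $L_2(0,1)$-orthogonal projection onto piecewise constant functions on the equidistant partition, i.e. $[Q_m y](s)=m\int_{\Delta_i}y(t)\,dt$ for $s\in\Delta_i=[(i-1)/m,i/m)$. If $[Q_m y^\delta](\sqrt\delta)\ge0$, then $$\left|\sqrt{\tfrac{1}{\sqrt\delta}[Q_my^\delta](\sqrt\delta)}-x_0(0)\right|\le\frac{1+4\|x_0\|_{C^1(0,1)}^2}{x_0(0)}\sqrt\delta,$$ and otherwise $$|x_0(0)|\le\frac{1+4\|x_0\|_{C^1(0,1)}^2}{x_0(0)}\sqrt\delta.$$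
   Context: All functions are real-valued. $\|x\|_{C^1(0,1)}:=\max\{\|x\|_\infty,\|x'\|_\infty\}$, where $\|\cdot\|_\infty$ is the essential supremum norm. The last partition interval is taken to contain the endpoint $1$ so that $Q_my$ is defined on $[0,1]$. *)

theory Defs
  imports "HOL-Analysis.Analysis"
begin

text \<open>W^2_inf(0,1): x is C^1 on [0,1] with derivative x' (one-sided at endpoints),
  and x' is Lipschitz on [0,1] (equivalently x' is in W^1_inf).\<close>
definition W2inf :: "(real \<Rightarrow> real) \<Rightarrow> (real \<Rightarrow> real) \<Rightarrow> bool" where
  "W2inf x x' \<longleftrightarrow>
     (\<forall>t\<in>{0..1}. (x has_real_derivative x' t) (at t within {0..1})) \<and>
     (\<exists>L. \<forall>s\<in>{0..1}. \<forall>t\<in>{0..1}. \<bar>x' s - x' t\<bar> \<le> L * \<bar>s - t\<bar>)"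

text \<open>C^1(0,1) norm max(||x||_inf, ||x'||_inf); for continuous x, x' the essential
  supremum equals the supremum over [0,1].\<close>
definition C1norm :: "(real \<Rightarrow> real) \<Rightarrow> (real \<Rightarrow> real) \<Rightarrow> real" where
  "C1norm x x' = max (SUP t\<in>{0..1}. \<bar>x t\<bar>) (SUP t\<in>{0..1}. \<bar>x' t\<bar>)"

definition Fconv :: "(real \<Rightarrow> real) \<Rightarrow> real \<Rightarrow> real" where
  "Fconv x s = integral {0..s} (\<lambda>t. x (s - t) * x t)"

text \<open>Index (0-based) of the partition interval [i/m,(i+1)/m) containing s;
  the last interval also contains 1.\<close>
definition cell :: "nat \<Rightarrow> real \<Rightarrow> nat" where
  "cell m s = min (nat \<lfloor>s * real m\<rfloor>) (m - 1)"

definition Qm :: "nat \<Rightarrow> (real \<Rightarrow> real) \<Rightarrow> real \<Rightarrow> real" where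
  "Qm m y s = real m * integral {real (cell m s) / real m .. real (Suc (cell m s)) / real m} y"

end

theory Submission imports Defs begin

text \<open>For x in W^2_inf, the integrand x(s - t) x(t) of F(x)(s) differs from x(0)^2 by at most
  \<parallel>x\<parallel>^2 s, so F(x)(s) = s x(0)^2 up to \<parallel>x\<parallel>^2 s^2 (with \<parallel>x\<parallel> the C^1 norm). Averaging the
  data over the cell of width 1/m \<le> \<delta> containing \<surd>\<delta> therefore returns \<surd>\<delta> x(0)^2 up to
  \<delta> (1 + 4 \<parallel>x\<parallel>^2): the noise contributes \<delta>^2, the linear term varies by \<parallel>x\<parallel>^2 \<delta> on the
  cell and the quadratic remainder is at most 3 \<parallel>x\<parallel>^2 \<delta> there. Dividing by \<surd>\<delta> and using
  |\<surd>q - c| \<le> |q - c^2| / c gives the estimate.\<close>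

definition cell_interval :: "nat \<Rightarrow> real \<Rightarrow> real set" where
  "cell_interval m s = {real (cell m s) / real m .. real (Suc (cell m s)) / real m}"

lemma Qm_eq_cell_interval: "Qm m y s = real m * integral (cell_interval m s) y"
  by (simp add: Qm_def cell_interval_def)

lemma cell_bounds:
  assumes m: "1 \<le> m" and s: "0 \<le> s" "s \<le> 1"
  shows "real (cell m s) / m \<le> s" "s \<le> real (Suc (cell m s)) / m" "Suc (cell m s) \<le> m"
proof -
  have mp: "real m > 0" using m by simp
  have fl: "real (nat \<lfloor>s * real m\<rfloor>) = of_int \<lfloor>s * real m\<rfloor>" using s by simp
  show "Suc (cell m s) \<le> m" unfolding cell_def using m by linarith
  have "real (cell m s) \<le> real (nat \<lfloor>s * real m\<rfloor>)" unfolding cell_def by simp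
  also have "\<dots> \<le> s * real m" using fl by linarith
  finally show "real (cell m s) / m \<le> s" using mp by (simp add: divide_le_eq)
  show "s \<le> real (Suc (cell m s)) / m"
  proof (cases "nat \<lfloor>s * real m\<rfloor> \<le> m - 1")
    case True
    then have "real (Suc (cell m s)) = of_int \<lfloor>s * real m\<rfloor> + 1" using fl unfolding cell_def by simp
    also have "\<dots> \<ge> s * real m" by linarith
    finally show ?thesis using mp by (simp add: le_divide_eq)
  next
    case False
    then have "real (Suc (cell m s)) = real m" using m unfolding cell_def by simp
    then show ?thesis using mp s by simp
  qed
qed

lemma cell_interval_props:
  assumes "1 \<le> m" "s \<in> {0..1}"
  shows "s \<in> cell_interval m s" "cell_interval m s \<subseteq> {0..1}"
    and "measure lborel (cell_interval m s) = 1 / real m"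
    and "\<And>t. t \<in> cell_interval m s \<Longrightarrow> \<bar>t - s\<bar> \<le> 1 / real m"
proof -
  have mp: "real m > 0" using assms(1) by simp
  note b = cell_bounds[OF assms(1), of s]
  have width: "real (Suc (cell m s)) / real m - real (cell m s) / real m = 1 / real m"
    by (simp add: diff_divide_distrib[symmetric])
  show "s \<in> cell_interval m s" using b assms(2) by (simp add: cell_interval_def)
  show "cell_interval m s \<subseteq> {0..1}" using b assms(2) mp by (auto simp: cell_interval_def divide_le_eq)
  show "measure lborel (cell_interval m s) = 1 / real m"
    using width mp by (simp add: cell_interval_def divide_right_mono)
  show "\<bar>t - s\<bar> \<le> 1 / real m" if "t \<in> cell_interval m s" for t
    using that b assms(2) width by (auto simp: cell_interval_def)
qed

lemma Qm_dist_le: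
  assumes m: "1 \<le> m" and s: "s \<in> {0..1}" and f: "f integrable_on cell_interval m s"
    and bound: "\<And>t. t \<in> cell_interval m s \<Longrightarrow> \<bar>f t - v\<bar> \<le> e"
  shows "\<bar>Qm m f s - v\<bar> \<le> e"
proof -
  let ?I = "cell_interval m s"
  have mp: "real m > 0" using m by simp
  obtain a b where I: "?I = cbox a b"
    unfolding cell_interval_def by (metis cbox_interval)
  have "f integrable_on cbox a b" using f I by simp
  from has_integral_diff[OF integrable_integral[OF this] has_integral_const[of v]]
  have "((\<lambda>t. f t - v) has_integral (integral ?I f - measure lborel ?I * v)) ?I"
    unfolding I by simp
  moreover have "0 \<le> e" using bound[OF cell_interval_props(1)[OF m s]] by linarith
  ultimately have "\<bar>integral ?I f - measure lborel ?I * v\<bar> \<le> e * measure lborel ?I"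
    using has_integral_bound[of e "\<lambda>t. f t - v"] bound unfolding I by simp
  then have "\<bar>integral ?I f - v / real m\<bar> \<le> e / real m"
    using cell_interval_props(3)[OF m s] by simp
  then show ?thesis using mp unfolding Qm_eq_cell_interval
    by (simp add: field_simps abs_mult)
qed

lemma AE_bounded_obtain_bounded_representative:
  fixes \<xi> :: "real \<Rightarrow> real"
  assumes "\<xi> \<in> borel_measurable lborel" "0 \<le> e" "AE t in lborel. t \<in> S \<longrightarrow> \<bar>\<xi> t\<bar> \<le> e"
  obtains \<eta> where "\<eta> \<in> borel_measurable lborel" "\<And>t. \<bar>\<eta> t\<bar> \<le> e"
    "AE t in lborel. t \<in> S \<longrightarrow> \<eta> t = \<xi> t"
proof
  let ?\<eta> = "\<lambda>t. max (- e) (min e (\<xi> t))"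
  show "?\<eta> \<in> borel_measurable lborel" using assms(1) by measurable
  show "\<bar>?\<eta> t\<bar> \<le> e" for t using assms(2) by auto
  show "AE t in lborel. t \<in> S \<longrightarrow> ?\<eta> t = \<xi> t" using assms(3) by eventually_elim auto
qed

lemma bounded_borel_integrable_on_interval:
  fixes f :: "real \<Rightarrow> real"
  assumes "f \<in> borel_measurable lborel" "\<And>t. \<bar>f t\<bar> \<le> e"
  shows "f integrable_on {a..b}"
proof -
  have "f absolutely_integrable_on {a..b}"
  proof (rule measurable_bounded_by_integrable_imp_absolutely_integrable)
    show "f \<in> borel_measurable (lebesgue_on {a..b})"
      by (intro measurable_restrict_space1 measurable_completion assms(1))
  qed (use assms(2) in auto)
  then show ?thesis using set_lebesgue_integral_eq_integral(1) by blast
qed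

lemma Qm_cong_AE:
  assumes "1 \<le> m" "s \<in> {0..1}" "AE t in lborel. t \<in> {0..1} \<longrightarrow> f t = g t"
  shows "Qm m f s = Qm m g s"
proof -
  have "AE t in lborel. t \<in> cell_interval m s \<longrightarrow> f t = g t"
    using assms(3) by eventually_elim (use cell_interval_props(2)[OF assms(1,2)] in blast)
  then have "integral (cell_interval m s) f = integral (cell_interval m s) g"
    unfolding integral_def integrable_on_def by (simp add: has_integral_AE)
  then show ?thesis unfolding Qm_eq_cell_interval by simp
qed

text \<open>The substitution t = s u moves the dependence on s from the domain of integration
  into the integrand.\<close>

lemma Fconv_eq_scaled_integral:
  assumes "0 \<le> s"
  shows "Fconv x s = s * integral {0..1} (\<lambda>u. x (s - s * u) * x (s * u))"
proof (cases "s = 0")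
  case True then show ?thesis by (simp add: Fconv_def)
next
  case False
  with assms have sp: "s > 0" by simp
  have img: "(\<lambda>t. t / s) ` {0..s} = {0..1}"
  proof
    show "(\<lambda>t. t / s) ` {0..s} \<subseteq> {0..1}" using sp by (auto simp: divide_le_eq)
    show "{0..1} \<subseteq> (\<lambda>t. t / s) ` {0..s}"
    proof
      fix u :: real assume "u \<in> {0..1}"
      then have "s * u \<in> {0..s}" "u = (s * u) / s" using sp by (auto simp: mult_le_cancel_left1)
      then show "u \<in> (\<lambda>t. t / s) ` {0..s}" by blast
    qed
  qed
  have "integral ((\<lambda>t. t / s) ` {0..s}) (\<lambda>u. (\<lambda>t. x (s - t) * x t) (s * u))
        = (1 / \<bar>s\<bar>) *\<^sub>R integral {0..s} (\<lambda>t. x (s - t) * x t)"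
    using sp by (intro integral_stretch_real) simp
  then have "integral {0..1} (\<lambda>u. x (s - s * u) * x (s * u)) = Fconv x s / s"
    using sp unfolding img Fconv_def by simp
  then show ?thesis using sp by simp
qed

lemma continuous_on_Fconv:
  assumes c: "continuous_on {0..1} x"
  shows "continuous_on {0..1} (Fconv x)"
proof -
  let ?D = "{0..1} \<times> cbox 0 1 :: (real \<times> real) set"
  have 1: "continuous_on ?D (\<lambda>p. fst p - fst p * snd p)"
    and 2: "continuous_on ?D (\<lambda>p. fst p * snd p)"
    by (intro continuous_intros)+
  have i1: "(\<lambda>p. fst p - fst p * snd p) ` ?D \<subseteq> {0..1}"
    by (auto simp: mult_le_cancel_left1 mult_left_le) (smt (verit) mult_nonneg_nonneg)
  have i2: "(\<lambda>p. fst p * snd p) ` ?D \<subseteq> {0..1}"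
    by (auto intro: mult_le_one)
  have "continuous_on ?D (\<lambda>p. x (fst p - fst p * snd p) * x (fst p * snd p))"
    by (intro continuous_intros continuous_on_compose2[OF c 1 i1] continuous_on_compose2[OF c 2 i2])
  then have "continuous_on ?D (\<lambda>(s, u). x (s - s * u) * x (s * u))"
    by (simp add: case_prod_beta)
  then have "continuous_on {0..1} (\<lambda>s. integral (cbox 0 1) (\<lambda>u. x (s - s * u) * x (s * u)))"
    by (rule integral_continuous_on_param)
  then have "continuous_on {0..1} (\<lambda>s. s * integral {0..1} (\<lambda>u. x (s - s * u) * x (s * u)))"
    by (intro continuous_intros) (simp add: cbox_interval)
  then show ?thesis by (rule continuous_on_eq) (simp add: Fconv_eq_scaled_integral)
qed

lemma Fconv_linearization:
  assumes c: "continuous_on {0..1} x"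
    and bx: "\<And>t. t \<in> {0..1} \<Longrightarrow> \<bar>x t\<bar> \<le> M"
    and mv: "\<And>u. u \<in> {0..1} \<Longrightarrow> \<bar>x u - x 0\<bar> \<le> M * u"
    and s: "0 \<le> s" "s \<le> 1"
  shows "\<bar>Fconv x s - s * (x 0)\<^sup>2\<bar> \<le> M\<^sup>2 * s\<^sup>2"
proof -
  let ?g = "\<lambda>t. x (s - t) * x t"
  have M0: "0 \<le> M" using bx[of 0] by force
  have "continuous_on {0..s} ?g"
  proof -
    have 1: "continuous_on {0..s} (\<lambda>t. s - t)" by (intro continuous_intros)
    have i1: "(\<lambda>t. s - t) ` {0..s} \<subseteq> {0..1}" using s by auto
    have i2: "{0..s} \<subseteq> {0..1}" using s by auto
    show ?thesis
      by (intro continuous_intros continuous_on_compose2[OF c 1 i1] continuous_on_subset[OF c i2])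
  qed
  then have ig: "?g integrable_on {0..s}" by (rule integrable_continuous_interval)
  have "((\<lambda>t. ?g t - (x 0)\<^sup>2) has_integral (Fconv x s - s * (x 0)\<^sup>2)) (cbox 0 s)"
  proof -
    have "(?g has_integral Fconv x s) {0..s}" using ig unfolding Fconv_def by blast
    moreover have "((\<lambda>t. (x 0)\<^sup>2) has_integral s * (x 0)\<^sup>2) {0..s}"
      using has_integral_const_real[of "(x 0)\<^sup>2" 0 s] s by (simp add: mult.commute)
    ultimately show ?thesis by (simp add: has_integral_diff cbox_interval)
  qed
  moreover have "norm (?g t - (x 0)\<^sup>2) \<le> M\<^sup>2 * s" if t: "t \<in> cbox 0 s" for t
  proof -
    have t01: "t \<in> {0..1}" "s - t \<in> {0..1}" using t s by (auto simp: cbox_interval)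
    have split: "?g t - (x 0)\<^sup>2 = (x (s - t) - x 0) * x t + x 0 * (x t - x 0)"
      by (simp add: algebra_simps power2_eq_square)
    have a1: "\<bar>(x (s - t) - x 0) * x t\<bar> \<le> (M * (s - t)) * M"
      unfolding abs_mult by (intro mult_mono) (use mv bx t01 M0 t in \<open>auto simp: cbox_interval\<close>)
    have a2: "\<bar>x 0 * (x t - x 0)\<bar> \<le> M * (M * t)"
      unfolding abs_mult by (intro mult_mono) (use mv bx t01 M0 t in \<open>auto simp: cbox_interval\<close>)
    have "\<bar>?g t - (x 0)\<^sup>2\<bar> \<le> (M * (s - t)) * M + M * (M * t)"
      unfolding split using a1 a2 abs_triangle_ineq order_trans add_mono by fastforce
    also have "\<dots> = M\<^sup>2 * s" by (simp add: algebra_simps power2_eq_square)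
    finally show ?thesis by simp
  qed
  ultimately have "norm (Fconv x s - s * (x 0)\<^sup>2) \<le> M\<^sup>2 * s * measure lborel (cbox 0 s)"
    using M0 s by (intro has_integral_bound) auto
  then show ?thesis using s by (simp add: power2_eq_square mult.assoc)
qed

lemma W2inf_continuous_on:
  assumes "W2inf x x'"
  shows "continuous_on {0..1} x" "continuous_on {0..1} x'"
proof -
  obtain L where L: "\<forall>s\<in>{0..1}. \<forall>t\<in>{0..1}. \<bar>x' s - x' t\<bar> \<le> L * \<bar>s - t\<bar>"
    and der: "\<forall>t\<in>{0..1}. (x has_real_derivative x' t) (at t within {0..1})"
    using assms unfolding W2inf_def by blast
  show "continuous_on {0..1} x" using der by (intro DERIV_continuous_on) auto
  have "(max L 0)-lipschitz_on {0..1} x'"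
    unfolding lipschitz_on_def dist_real_def
  proof (intro conjI ballI)
    fix s t :: real assume "s \<in> {0..1}" "t \<in> {0..1}"
    then have "\<bar>x' s - x' t\<bar> \<le> L * \<bar>s - t\<bar>" using L by blast
    also have "\<dots> \<le> max L 0 * \<bar>s - t\<bar>" by (intro mult_right_mono) auto
    finally show "\<bar>x' s - x' t\<bar> \<le> max L 0 * \<bar>s - t\<bar>" .
  qed auto
  then show "continuous_on {0..1} x'" by (rule lipschitz_on_continuous_on)
qed

lemma abs_le_SUP_continuous_on:
  fixes f :: "real \<Rightarrow> real"
  assumes "continuous_on {a..b} f" "t \<in> {a..b}"
  shows "\<bar>f t\<bar> \<le> (SUP u\<in>{a..b}. \<bar>f u\<bar>)"
proof -
  have "compact ((\<lambda>u. \<bar>f u\<bar>) ` {a..b})"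
    using assms(1) by (intro compact_continuous_image continuous_intros) auto
  then show ?thesis
    using assms(2) by (intro cSUP_upper bounded_imp_bdd_above compact_imp_bounded)
qed

lemma W2inf_abs_le_C1norm:
  assumes "W2inf x x'" "t \<in> {0..1}"
  shows "\<bar>x t\<bar> \<le> C1norm x x'" "\<bar>x' t\<bar> \<le> C1norm x x'"
  using abs_le_SUP_continuous_on[OF W2inf_continuous_on(1)[OF assms(1)] assms(2)]
    abs_le_SUP_continuous_on[OF W2inf_continuous_on(2)[OF assms(1)] assms(2)]
  unfolding C1norm_def by linarith+

lemma W2inf_increment_le:
  assumes W: "W2inf x x'" and u: "u \<in> {0..1}"
  shows "\<bar>x u - x 0\<bar> \<le> C1norm x x' * u"
proof -
  have "norm (x u - x 0) \<le> C1norm x x' * norm (u - 0)"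
    using W u W2inf_abs_le_C1norm[OF W] unfolding W2inf_def
    by (intro field_differentiable_bound[of "{0..1}" x x']) auto
  then show ?thesis using u by simp
qed

lemma square_le_three_mult_if_near_sqrt:
  fixes s \<delta> :: real
  assumes "0 < \<delta>" "\<delta> \<le> 1" "0 \<le> s" "s \<le> 1" "\<bar>s - sqrt \<delta>\<bar> \<le> \<delta>"
  shows "s\<^sup>2 \<le> 3 * \<delta>"
proof -
  define r where "r = sqrt \<delta>"
  have r: "0 < r" "r\<^sup>2 = \<delta>" using assms(1) by (auto simp: r_def)
  show ?thesis
  proof (cases "r \<le> 0.7")
    case True
    have "s \<le> r * (1 + r)" using assms(5) r by (simp add: r_def algebra_simps power2_eq_square)
    then have "s\<^sup>2 \<le> r\<^sup>2 * (1 + r)\<^sup>2" using assms(3) by (metis power_mono power_mult_distrib)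
    also have "\<dots> \<le> r\<^sup>2 * 1.7\<^sup>2"
      using True r by (intro mult_left_mono power_mono) auto
    finally have "s\<^sup>2 \<le> \<delta> * 1.7\<^sup>2" using r by simp
    moreover have "\<delta> * 1.7\<^sup>2 \<le> 3 * \<delta>" using assms(1) by (simp add: power2_eq_square)
    ultimately show ?thesis by linarith
  next
    case False
    then have "0.7\<^sup>2 \<le> r\<^sup>2" by (intro power_mono) auto
    then have "0.49 \<le> \<delta>" using r by (simp add: power2_eq_square)
    moreover have "s\<^sup>2 \<le> 1" using assms(3,4) by (simp add: power_le_one)
    ultimately show ?thesis using r by simp
  qed
qed

lemma perturbed_linear_near_sqrt_bound:
  fixes F c M n s \<delta> :: real
  assumes F: "\<bar>F - s * c\<^sup>2\<bar> \<le> M\<^sup>2 * s\<^sup>2" and c: "\<bar>c\<bar> \<le> M" and n: "\<bar>n\<bar> \<le> \<delta>"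
    and \<delta>: "0 < \<delta>" "\<delta> \<le> 1" and s: "0 \<le> s" "s \<le> 1" "\<bar>s - sqrt \<delta>\<bar> \<le> \<delta>"
  shows "\<bar>F + n - sqrt \<delta> * c\<^sup>2\<bar> \<le> \<delta> * (1 + 4 * M\<^sup>2)"
proof -
  have "c\<^sup>2 \<le> M\<^sup>2" using c by (metis abs_ge_zero power2_abs power_mono)
  then have "\<bar>s - sqrt \<delta>\<bar> * c\<^sup>2 \<le> \<delta> * M\<^sup>2"
    using s(3) \<delta>(1) by (intro mult_mono) auto
  then have shift: "\<bar>s * c\<^sup>2 - sqrt \<delta> * c\<^sup>2\<bar> \<le> M\<^sup>2 * \<delta>"
    by (simp add: abs_mult mult.commute flip: left_diff_distrib)
  have "M\<^sup>2 * s\<^sup>2 \<le> M\<^sup>2 * (3 * \<delta>)"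
    using square_le_three_mult_if_near_sqrt[OF \<delta> s] by (intro mult_left_mono) auto
  then show ?thesis using F shift n by (simp add: algebra_simps)
qed

lemma sqrt_quotient_estimate:
  fixes Q r c K :: real
  assumes Q: "\<bar>Q - r * c\<^sup>2\<bar> \<le> r\<^sup>2 * K" "0 \<le> Q" and r: "0 < r" and c: "0 < c"
  shows "\<bar>sqrt (Q / r) - c\<bar> \<le> K / c * r"
proof -
  define q where "q = Q / r"
  have q: "0 \<le> q" using Q r by (simp add: q_def)
  have "\<bar>q - c\<^sup>2\<bar> = \<bar>Q - r * c\<^sup>2\<bar> / r" using r by (simp add: q_def field_simps)
  also have "\<dots> \<le> r * K" using Q r by (simp add: divide_le_eq power2_eq_square mult_ac)
  finally have qe: "\<bar>q - c\<^sup>2\<bar> \<le> r * K" .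
  have "(sqrt q - c) * (sqrt q + c) = q - c\<^sup>2"
    using q by (simp add: algebra_simps power2_eq_square)
  then have "\<bar>sqrt q - c\<bar> * (sqrt q + c) = \<bar>q - c\<^sup>2\<bar>"
    using c q by (metis abs_mult abs_of_nonneg add_nonneg_nonneg less_imp_le real_sqrt_ge_zero)
  moreover have "\<bar>sqrt q - c\<bar> * c \<le> \<bar>sqrt q - c\<bar> * (sqrt q + c)" using q by (intro mult_left_mono) auto
  ultimately have "\<bar>sqrt q - c\<bar> * c \<le> r * K" using qe by linarith
  then show ?thesis using c unfolding q_def by (simp add: field_simps)
qed

lemma negative_value_estimate:
  fixes Q r c K :: real
  assumes Q: "\<bar>Q - r * c\<^sup>2\<bar> \<le> r\<^sup>2 * K" "Q < 0" and r: "0 < r" and c: "0 < c"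
  shows "c \<le> K / c * r"
proof -
  have "r * c\<^sup>2 \<le> r * (r * K)" using Q by (simp add: power2_eq_square mult.assoc)
  then have "c\<^sup>2 \<le> r * K" using r by simp
  then show ?thesis using c by (simp add: field_simps power2_eq_square)
qed

lemma Qm_perturbed_Fconv_estimate:
  fixes \<eta> :: "real \<Rightarrow> real"
  assumes W: "W2inf x x'" and \<delta>: "0 < \<delta>" "\<delta> \<le> 1" and m: "1 \<le> m" "1 / real m \<le> \<delta>"
    and \<eta>: "\<eta> \<in> borel_measurable lborel" "\<And>t. \<bar>\<eta> t\<bar> \<le> \<delta>"
  shows "\<bar>Qm m (\<lambda>s. Fconv x s + \<delta> * \<eta> s) (sqrt \<delta>) - sqrt \<delta> * (x 0)\<^sup>2\<bar>
           \<le> \<delta> * (1 + 4 * (C1norm x x')\<^sup>2)"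
proof (rule Qm_dist_le[OF m(1)])
  let ?M = "C1norm x x'" and ?r = "sqrt \<delta>"
  show r: "?r \<in> {0..1}" using \<delta> by simp
  have "continuous_on (cell_interval m ?r) (Fconv x)"
    using continuous_on_Fconv[OF W2inf_continuous_on(1)[OF W]] cell_interval_props(2)[OF m(1) r]
    by (rule continuous_on_subset)
  then have "Fconv x integrable_on cell_interval m ?r"
    unfolding cell_interval_def by (rule integrable_continuous_interval)
  moreover have "\<eta> integrable_on cell_interval m ?r"
    unfolding cell_interval_def by (rule bounded_borel_integrable_on_interval[OF \<eta>])
  ultimately show "(\<lambda>s. Fconv x s + \<delta> * \<eta> s) integrable_on cell_interval m ?r"
    using integrable_on_cmult_left[of \<eta> _ \<delta>] by (intro integrable_add) auto
  fix t assume t: "t \<in> cell_interval m ?r"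
  then have "t \<in> {0..1}" "\<bar>t - ?r\<bar> \<le> \<delta>"
    using cell_interval_props(2)[OF m(1) r] cell_interval_props(4)[OF m(1) r t] m(2) by auto
  moreover have "\<bar>\<delta> * \<eta> t\<bar> \<le> \<delta>"
    using \<eta>(2)[of t] \<delta> by (simp add: abs_mult mult_le_one)
  moreover have "\<bar>Fconv x t - t * (x 0)\<^sup>2\<bar> \<le> ?M\<^sup>2 * t\<^sup>2"
    using \<open>t \<in> {0..1}\<close> W2inf_abs_le_C1norm(1)[OF W] W2inf_increment_le[OF W]
    by (intro Fconv_linearization W2inf_continuous_on(1)[OF W]) auto
  moreover have "\<bar>x 0\<bar> \<le> ?M" using W2inf_abs_le_C1norm(1)[OF W, of 0] by simp
  ultimately show "\<bar>Fconv x t + \<delta> * \<eta> t - ?r * (x 0)\<^sup>2\<bar> \<le> \<delta> * (1 + 4 * ?M\<^sup>2)"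
    using \<delta> by (intro perturbed_linear_near_sqrt_bound) auto
qed

text \<open>Neither the nonnegativity of x0 nor the regularisation parameter \<sigma> enters this estimate.\<close>

theorem proposition2p11:
  fixes x0 x0' \<xi> :: "real \<Rightarrow> real" and \<delta> \<sigma> :: real and m :: nat
  assumes W: "W2inf x0 x0'"
    and pos: "\<forall>t\<in>{0..1}. x0 t \<ge> 0"
    and x00: "x0 0 > 0"
    and \<delta>: "0 < \<delta>" "\<delta> \<le> 1"
    and \<xi>meas: "\<xi> \<in> borel_measurable lborel"
    and \<xi>bd: "AE t in lborel. t \<in> {0..1} \<longrightarrow> \<bar>\<xi> t\<bar> \<le> \<delta>"
    and \<sigma>: "\<sigma> > 0"
    and m: "real m \<ge> 1 / \<delta>"
  defines "y \<equiv> (\<lambda>s. Fconv x0 s + \<delta> * \<xi> s)"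
  shows "(Qm m y (sqrt \<delta>) \<ge> 0 \<longrightarrow>
           \<bar>sqrt (Qm m y (sqrt \<delta>) / sqrt \<delta>) - x0 0\<bar>
             \<le> (1 + 4 * (C1norm x0 x0')\<^sup>2) / x0 0 * sqrt \<delta>) \<and>
         (Qm m y (sqrt \<delta>) < 0 \<longrightarrow>
           \<bar>x0 0\<bar> \<le> (1 + 4 * (C1norm x0 x0')\<^sup>2) / x0 0 * sqrt \<delta>)"
proof -
  let ?K = "1 + 4 * (C1norm x0 x0')\<^sup>2" and ?r = "sqrt \<delta>"
  have "1 \<le> 1 / \<delta>" using \<delta> by simp
  then have m1: "1 \<le> m" using m by linarith
  have mesh: "1 / real m \<le> \<delta>" using m \<delta>(1) m1 by (simp add: field_simps mult.commute)
  obtain \<eta> where \<eta>: "\<eta> \<in> borel_measurable lborel" "\<And>t. \<bar>\<eta> t\<bar> \<le> \<delta>"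
    "AE t in lborel. t \<in> {0..1} \<longrightarrow> \<eta> t = \<xi> t"
    using AE_bounded_obtain_bounded_representative[OF \<xi>meas _ \<xi>bd] \<delta>(1) by auto
  have "Qm m y ?r = Qm m (\<lambda>s. Fconv x0 s + \<delta> * \<eta> s) ?r"
    using \<eta>(3) \<delta> by (intro Qm_cong_AE[OF m1]) (auto simp: y_def elim: AE_mp)
  then have "\<bar>Qm m y ?r - ?r * (x0 0)\<^sup>2\<bar> \<le> ?r\<^sup>2 * ?K"
    using Qm_perturbed_Fconv_estimate[OF W \<delta> m1 mesh \<eta>(1,2)] \<delta>(1) by simp
  then show ?thesis
    using sqrt_quotient_estimate[of _ ?r "x0 0"] negative_value_estimate[of _ ?r "x0 0"] \<delta>(1) x00
    by auto
qed

end
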